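(* Let $E$ be a Banach lattice. Then the identity operator on $E$ is $uaw$-Dunford-Pettis if and only if $E$ is finite dimensional.
   Context: A net $(x_\alpha)$ in a Banach lattice $E$ is $uaw$-convergent to $x$ if $|x_\alpha-x|\wedge u\to 0$ weakly for every $u\in E_+$. A bounded operator $T\colon E\to E$ is $uaw$-Dunford-Pettis if every norm bounded $uaw$-null sequence $(x_n)$ in $E$ satisfies $\|Tx_n\|\to 0$. *)

theory Defs
  imports "HOL-Analysis.Analysis"
begin

definition lmod :: "'a::{lattice, uminus} \<Rightarrow> 'a" where
  "lmod x = sup x (- x)"

class banach_lattice = banach + ordered_real_vector + lattice +
  assumes norm_lattice_mono: "sup x (- x) \<le> sup y (- y) \<Longrightarrow> norm x \<le> norm y"

definition weakly_tendsto :: "(nat \<Rightarrow> 'a::real_normed_vector) \<Rightarrow> 'a \<Rightarrow> bool" where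
  "weakly_tendsto x l \<longleftrightarrow>
     (\<forall>f :: 'a \<Rightarrow> real. bounded_linear f \<longrightarrow> (\<lambda>n. f (x n)) \<longlonglongrightarrow> f l)"

definition uaw_tendsto :: "(nat \<Rightarrow> 'a::banach_lattice) \<Rightarrow> 'a \<Rightarrow> bool" where
  "uaw_tendsto x l \<longleftrightarrow>
     (\<forall>u. 0 \<le> u \<longrightarrow> weakly_tendsto (\<lambda>n. inf (lmod (x n - l)) u) 0)"

definition uaw_dunford_pettis :: "('a::banach_lattice \<Rightarrow> 'a) \<Rightarrow> bool" where
  "uaw_dunford_pettis T \<longleftrightarrow> bounded_linear T \<and>
     (\<forall>x :: nat \<Rightarrow> 'a. bounded (range x) \<longrightarrow> uaw_tendsto x 0 \<longrightarrow>
        (\<lambda>n. norm (T (x n))) \<longlonglongrightarrow> 0)"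

definition fin_dim_space :: "'a::real_vector itself \<Rightarrow> bool" where
  "fin_dim_space _ \<longleftrightarrow> (\<exists>B :: 'a set. finite B \<and> span B = UNIV)"

end

theory Submission
  imports Defs "HOL-Library.Lattice_Algebras"
begin

text \<open>If the identity is uaw-Dunford-Pettis, there is no sequence of nonzero, pairwise
  disjoint positive elements: normalised, such a sequence is uaw-null, because a disjoint
  order bounded sequence is weakly null, yet it has norm \<open>1\<close>. Without such sequences
  every nonzero positive element dominates an atom, a maximal disjoint family of atoms is
  finite, and every \<open>x \<ge> 0\<close> is the sum of its components along these atoms; so finitely
  many atoms span the space.

  Conversely, in finite dimensions disjoint positive elements are linearly independent, so
  again there is such a finite atomic basis. A norm bounded sequence is then order bounded
  by some \<open>u\<close>, uaw-nullity makes \<open>|x n|\<close> weakly null, and the coordinates of \<open>|x n|\<close>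
  with respect to the atoms are continuous functionals, hence tend to \<open>0\<close>.\<close>

instance banach_lattice \<subseteq> lattice_ab_group_add ..

subsection \<open>Vector lattice arithmetic\<close>

lemma lmod_eq_self: "0 \<le> (x::'a::lattice_ab_group_add) \<Longrightarrow> lmod x = x"
  unfolding lmod_def by (rule sup_absorb1) (meson neg_le_0_iff_le order.trans)

lemma lmod_ge: "(x::'a::lattice_ab_group_add) \<le> lmod x"
  unfolding lmod_def by simp

lemma lmod_ge_uminus: "- (x::'a::lattice_ab_group_add) \<le> lmod x"
  unfolding lmod_def by simp

lemma lmod_nonneg: "0 \<le> lmod (x::'a::lattice_ab_group_add)"
proof -
  have "x + (- x) \<le> lmod x + lmod x" by (intro add_mono lmod_ge lmod_ge_uminus)
  then show ?thesis by simp
qed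

lemma pos_part_diff_neg_part: "sup (x::'a::lattice_ab_group_add) 0 - sup (- x) 0 = x"
proof -
  have "x + sup 0 (- x) = sup x 0" by (simp add: add_sup_distrib_left)
  then show ?thesis by (metis add_diff_cancel sup_commute)
qed

lemma disjoint_pos_part_neg_part: "inf (sup (x::'a::lattice_ab_group_add) 0) (sup (- x) 0) = 0"
proof -
  have "inf (sup x 0) (sup (- x) 0) = inf (x + sup (- x) 0) (0 + sup (- x) 0)"
    by (simp add: add_sup_distrib_left sup_commute)
  also have "\<dots> = inf x 0 + sup (- x) 0"
    by (rule add_inf_distrib_right[symmetric])
  also have "\<dots> = - sup (- x) 0 + sup (- x) 0"
    using inf_eq_neg_sup[of x 0] by (simp only: minus_zero)
  also have "\<dots> = 0"
    by (rule left_minus)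
  finally show ?thesis .
qed

lemma member_le_sum_nonneg:
  fixes f :: "'b \<Rightarrow> 'a::ordered_comm_monoid_add"
  assumes "finite S" "\<And>w. w \<in> S \<Longrightarrow> 0 \<le> f w" "v \<in> S"
  shows "f v \<le> sum f S"
proof -
  have "sum f S = f v + sum f (S - {v})"
    using assms by (simp add: sum.remove)
  moreover have "0 \<le> sum f (S - {v})"
    using assms by (intro sum_nonneg) auto
  ultimately show ?thesis
    using add_mono[of "f v" "f v" 0 "sum f (S - {v})"] by simp
qed

lemma inf_add_le_add_inf:
  fixes p q r :: "'a::lattice_ab_group_add"
  assumes "0 \<le> p" "0 \<le> q" "0 \<le> r"
  shows "inf (p + q) r \<le> inf p r + inf q r"
proof -
  have "inf p r + inf q r = inf (inf (p + q) (p + r)) (inf (r + q) (r + r))"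
    by (simp add: add_inf_distrib_right add_inf_distrib_left inf_commute inf_left_commute)
  moreover have "inf (p + q) r \<le> inf (inf (p + q) (p + r)) (inf (r + q) (r + r))"
    using assms by (auto intro: le_infI2 add_increasing add_increasing2)
  ultimately show ?thesis by simp
qed

lemma disjoint_sum:
  fixes f :: "'b \<Rightarrow> 'a::lattice_ab_group_add"
  assumes "finite B" "\<And>b. b \<in> B \<Longrightarrow> 0 \<le> f b" "\<And>b. b \<in> B \<Longrightarrow> inf (f b) r = 0" "0 \<le> r"
  shows "inf (sum f B) r = 0"
  using assms
proof (induction B rule: finite_induct)
  case (insert c B)
  then have "inf (f c + sum f B) r \<le> 0"
    using inf_add_le_add_inf[of "f c" "sum f B" r] by (simp add: sum_nonneg)
  with insert show ?case by (simp add: antisym sum_nonneg)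
qed (simp add: inf_absorb1)

text \<open>For disjoint positive \<open>p\<close> and \<open>q\<close>, \<open>p + q = sup p q\<close>.\<close>

lemma sum_le_if_disjoint:
  fixes f :: "'b \<Rightarrow> 'a::lattice_ab_group_add"
  assumes "finite B" "\<And>b. b \<in> B \<Longrightarrow> 0 \<le> f b" "\<And>b. b \<in> B \<Longrightarrow> f b \<le> x"
    "pairwise (\<lambda>b c. inf (f b) (f c) = 0) B" "0 \<le> x"
  shows "sum f B \<le> x"
  using assms
proof (induction B rule: finite_induct)
  case (insert c B)
  then have "inf (sum f B) (f c) = 0"
    by (intro disjoint_sum) (auto simp: pairwise_insert)
  then have "sum f (insert c B) = sup (sum f B) (f c)"
    using insert add_eq_inf_sup[of "sum f B" "f c"] by (simp add: add.commute)
  also have "\<dots> \<le> x"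
    using insert by (simp add: pairwise_insert)
  finally show ?case .
qed simp

lemma inf_scaleR_nonneg:
  fixes p q :: "'a::{ordered_real_vector, lattice_ab_group_add}"
  assumes "0 \<le> c" shows "inf (c *\<^sub>R p) (c *\<^sub>R q) = c *\<^sub>R inf p q"
proof (cases "c = 0")
  case False
  with assms have c: "0 < c" by simp
  have "(1/c) *\<^sub>R inf (c *\<^sub>R p) (c *\<^sub>R q) \<le> inf p q"
    using c scaleR_left_mono[of "inf (c *\<^sub>R p) (c *\<^sub>R _)" "c *\<^sub>R _" "1/c"]
    by (simp add: le_inf_iff)
  then have "c *\<^sub>R ((1/c) *\<^sub>R inf (c *\<^sub>R p) (c *\<^sub>R q)) \<le> c *\<^sub>R inf p q"
    using c by (intro scaleR_left_mono) auto
  then have "inf (c *\<^sub>R p) (c *\<^sub>R q) \<le> c *\<^sub>R inf p q"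
    using c by simp
  moreover have "c *\<^sub>R inf p q \<le> inf (c *\<^sub>R p) (c *\<^sub>R q)"
    using c by (simp add: scaleR_left_mono)
  ultimately show ?thesis by (rule antisym)
qed simp

lemma disjoint_scaleR:
  fixes p q :: "'a::{ordered_real_vector, lattice_ab_group_add}"
  assumes "0 \<le> a" "0 \<le> b" "0 \<le> p" "0 \<le> q" "inf p q = 0"
  shows "inf (a *\<^sub>R p) (b *\<^sub>R q) = 0"
proof (rule antisym)
  have "inf (a *\<^sub>R p) (b *\<^sub>R q) \<le> inf (max a b *\<^sub>R p) (max a b *\<^sub>R q)"
    using assms by (intro inf_mono scaleR_right_mono) auto
  also have "\<dots> = 0"
    using assms by (simp add: inf_scaleR_nonneg)
  finally show "inf (a *\<^sub>R p) (b *\<^sub>R q) \<le> 0" .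
  show "0 \<le> inf (a *\<^sub>R p) (b *\<^sub>R q)"
    using assms by (simp add: scaleR_nonneg_nonneg)
qed

lemma lmod_sum_scaleR_le:
  fixes y :: "'b \<Rightarrow> 'a::{ordered_real_vector, lattice_ab_group_add}"
  assumes "\<And>n. n \<in> S \<Longrightarrow> \<bar>c n\<bar> \<le> 1" "\<And>n. n \<in> S \<Longrightarrow> 0 \<le> y n"
  shows "lmod (\<Sum>n\<in>S. c n *\<^sub>R y n) \<le> (\<Sum>n\<in>S. y n)"
proof -
  have "c n *\<^sub>R y n \<le> y n" "- (c n *\<^sub>R y n) \<le> y n" if "n \<in> S" for n
    using assms[OF that] scaleR_right_mono[of "c n" 1 "y n"] scaleR_right_mono[of "- c n" 1 "y n"]
    by auto
  then have "(\<Sum>n\<in>S. c n *\<^sub>R y n) \<le> (\<Sum>n\<in>S. y n)"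
    and "- (\<Sum>n\<in>S. c n *\<^sub>R y n) \<le> (\<Sum>n\<in>S. y n)"
    by (auto simp flip: sum_negf intro: sum_mono)
  then show ?thesis
    unfolding lmod_def by simp
qed

lemma disjoint_sum_scaleR:
  fixes S :: "'a::{ordered_real_vector, lattice_ab_group_add} set"
  assumes S: "finite S" "\<And>w. w \<in> S \<Longrightarrow> 0 \<le> w" "pairwise (\<lambda>a b. inf a b = 0) S"
    and pq: "\<And>w. 0 \<le> p w" "\<And>w. 0 \<le> q w" "\<And>w. p w = 0 \<or> q w = 0"
  shows "inf (\<Sum>w\<in>S. p w *\<^sub>R w) (\<Sum>w\<in>S. q w *\<^sub>R w) = 0"
proof -
  have terms_nonneg: "0 \<le> p w *\<^sub>R w" "0 \<le> q w *\<^sub>R w" if "w \<in> S" for w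
    using S that pq by (simp_all add: scaleR_nonneg_nonneg)
  have cross: "inf (q w' *\<^sub>R w') (p w *\<^sub>R w) = 0" if "w \<in> S" "w' \<in> S" for w w'
  proof (cases "w = w'")
    case True
    then show ?thesis
      using pq(3)[of w] terms_nonneg that by (auto simp: inf_absorb1 inf_absorb2)
  next
    case False
    then show ?thesis
      using not_sym[OF False] S that pq unfolding pairwise_def by (intro disjoint_scaleR) auto
  qed
  have "inf (p w *\<^sub>R w) (\<Sum>w'\<in>S. q w' *\<^sub>R w') = 0" if "w \<in> S" for w
    using disjoint_sum[of S "\<lambda>w'. q w' *\<^sub>R w'" "p w *\<^sub>R w"] S terms_nonneg cross that
    by (simp add: inf_commute)
  then show ?thesis
    using S terms_nonneg by (intro disjoint_sum sum_nonneg) auto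
qed

text \<open>A vanishing combination splits into two equal combinations with nonnegative
  coefficients, which are disjoint and hence zero.\<close>

lemma independent_if_disjoint_nonneg:
  fixes A :: "'a::{ordered_real_vector, lattice_ab_group_add} set"
  assumes A: "\<And>a. a \<in> A \<Longrightarrow> 0 \<le> a \<and> a \<noteq> 0" and disj: "pairwise (\<lambda>a b. inf a b = 0) A"
  shows "independent A"
  unfolding independent_explicit_finite_subsets
proof (intro allI impI ballI)
  fix S u v
  assume S: "S \<subseteq> A" "finite S" and sum0: "(\<Sum>w\<in>S. u w *\<^sub>R w) = 0" and v: "v \<in> S"
  define p where "p w = max (u w) 0" for w
  define q where "q w = max (- u w) 0" for w
  have pq: "0 \<le> p w" "0 \<le> q w" "p w = 0 \<or> q w = 0" "p w - q w = u w" for w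
    unfolding p_def q_def by auto
  let ?P = "\<Sum>w\<in>S. p w *\<^sub>R w" and ?Q = "\<Sum>w\<in>S. q w *\<^sub>R w"
  have terms_nonneg: "0 \<le> p w *\<^sub>R w" "0 \<le> q w *\<^sub>R w" if "w \<in> S" for w
    using A S that pq by (auto simp: scaleR_nonneg_nonneg)
  have "?P - ?Q = (\<Sum>w\<in>S. u w *\<^sub>R w)"
    using pq(4) by (simp only: sum_subtractf[symmetric] scaleR_diff_left[symmetric])
  then have "?P = ?Q"
    using sum0 by simp
  moreover have "inf ?P ?Q = 0"
    using S A pq(1-3) pairwise_subset[OF disj S(1)] by (intro disjoint_sum_scaleR) auto
  ultimately have P0: "?P = 0" and Q0: "?Q = 0"
    by simp_all
  have "p v *\<^sub>R v \<le> ?P"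
    by (rule member_le_sum_nonneg[OF S(2) terms_nonneg(1) v])
  moreover have "q v *\<^sub>R v \<le> ?Q"
    by (rule member_le_sum_nonneg[OF S(2) terms_nonneg(2) v])
  ultimately have "p v *\<^sub>R v = 0" "q v *\<^sub>R v = 0"
    using P0 Q0 terms_nonneg[OF v] by (auto intro: order.antisym)
  then show "u v = 0"
    using A S v pq(4)[of v] unfolding p_def q_def by auto
qed

subsection \<open>Norm and order\<close>

lemma norm_le_if_lmod_le:
  fixes x y :: "'a::banach_lattice"
  assumes "lmod x \<le> lmod y" shows "norm x \<le> norm y"
  using norm_lattice_mono[of x y] assms unfolding lmod_def by simp

lemma norm_mono_nonneg:
  fixes a b :: "'a::banach_lattice"
  assumes "0 \<le> a" "a \<le> b" shows "norm a \<le> norm b"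
  using assms by (intro norm_le_if_lmod_le) (simp add: lmod_eq_self)

lemma norm_lmod: "norm (lmod (x::'a::banach_lattice)) = norm x"
  using lmod_eq_self[OF lmod_nonneg, of x]
  by (intro antisym norm_le_if_lmod_le) simp_all

lemma norm_pos_part_le: "norm (sup (x::'a::banach_lattice) 0) \<le> norm x"
  using norm_mono_nonneg[of "sup x 0" "lmod x"] lmod_ge[of x] lmod_nonneg[of x]
  by (simp add: norm_lmod)

lemma norm_neg_part_le: "norm (sup (- x::'a::banach_lattice) 0) \<le> norm x"
  using norm_mono_nonneg[of "sup (- x) 0" "lmod x"] lmod_ge_uminus[of x] lmod_nonneg[of x]
  by (simp add: norm_lmod)

text \<open>Banach lattices are Archimedean: the negative part of \<open>z\<close> has norm at most
  \<open>\<epsilon> * norm e\<close> for every \<open>\<epsilon> > 0\<close>.\<close>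

lemma nonneg_if_ge_neg_scaleR:
  fixes e z :: "'a::banach_lattice"
  assumes e: "0 \<le> e" and ge: "\<And>\<epsilon>. \<epsilon> > 0 \<Longrightarrow> - (\<epsilon> *\<^sub>R e) \<le> z"
  shows "0 \<le> z"
proof -
  let ?w = "sup (- z) 0"
  have small: "norm ?w \<le> \<epsilon> * norm e" if "\<epsilon> > 0" for \<epsilon>
  proof -
    have "?w \<le> \<epsilon> *\<^sub>R e"
      using ge[OF that] e that by (auto intro!: sup_least scaleR_nonneg_nonneg simp: minus_le_iff)
    then show ?thesis
      using norm_mono_nonneg[of ?w "\<epsilon> *\<^sub>R e"] that by simp
  qed
  have "norm ?w \<le> 0 + \<delta>" if "\<delta> > 0" for \<delta>
  proof -
    have "\<delta> / (norm e + 1) * norm e \<le> \<delta>"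
      using that by (simp add: field_simps add_pos_nonneg mult_left_mono)
    then show ?thesis
      using small[of "\<delta> / (norm e + 1)"] that
      by (smt (verit) divide_pos_pos norm_ge_zero)
  qed
  then have "norm ?w \<le> 0"
    by (rule field_le_epsilon)
  then have "?w = 0" by simp
  then have "- z \<le> 0" by (metis sup_ge1)
  then show ?thesis by simp
qed

definition max_multiple :: "'a::banach_lattice \<Rightarrow> 'a \<Rightarrow> real" where
  "max_multiple e x = Sup {\<mu>. \<mu> *\<^sub>R e \<le> x}"

lemma bdd_above_multiples_below:
  fixes e x :: "'a::banach_lattice"
  assumes "0 \<le> e" "e \<noteq> 0"
  shows "bdd_above {\<mu>. \<mu> *\<^sub>R e \<le> x}"
proof (rule bdd_aboveI)
  fix \<mu> assume \<mu>: "\<mu> \<in> {\<mu>. \<mu> *\<^sub>R e \<le> x}"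
  show "\<mu> \<le> norm x / norm e"
  proof (cases "\<mu> \<le> 0")
    case False
    then have "norm (\<mu> *\<^sub>R e) \<le> norm x"
      using \<mu> assms by (intro norm_mono_nonneg) (auto simp: scaleR_nonneg_nonneg)
    then show ?thesis
      using False assms by (simp add: pos_le_divide_eq)
  qed (use assms in \<open>simp add: order_trans[OF _ divide_nonneg_nonneg]\<close>)
qed

lemma le_max_multiple:
  fixes e x :: "'a::banach_lattice"
  assumes "0 \<le> e" "e \<noteq> 0" "\<mu> *\<^sub>R e \<le> x"
  shows "\<mu> \<le> max_multiple e x"
  unfolding max_multiple_def using assms bdd_above_multiples_below by (intro cSup_upper) auto

lemma max_multiple_nonneg:
  fixes e x :: "'a::banach_lattice"
  assumes "0 \<le> e" "e \<noteq> 0" "0 \<le> x"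
  shows "0 \<le> max_multiple e x"
  using le_max_multiple[of e 0 x] assms by simp

lemma max_multiple_scaleR_le:
  fixes e x :: "'a::banach_lattice"
  assumes e: "0 \<le> e" "e \<noteq> 0" and x: "0 \<le> x"
  shows "max_multiple e x *\<^sub>R e \<le> x"
proof -
  have "0 \<le> x - max_multiple e x *\<^sub>R e"
  proof (rule nonneg_if_ge_neg_scaleR[OF e(1)])
    fix \<epsilon> :: real assume "\<epsilon> > 0"
    then have "max_multiple e x - \<epsilon> < Sup {\<mu>. \<mu> *\<^sub>R e \<le> x}"
      unfolding max_multiple_def by simp
    moreover have "{\<mu>. \<mu> *\<^sub>R e \<le> x} \<noteq> {}"
      using x by (metis empty_iff mem_Collect_eq scaleR_zero_left)
    ultimately obtain \<mu> where \<mu>: "\<mu> *\<^sub>R e \<le> x" "max_multiple e x - \<epsilon> < \<mu>"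
      by (rule less_cSupE) simp
    have "(max_multiple e x - \<epsilon>) *\<^sub>R e \<le> x"
      using order_trans[OF scaleR_right_mono[OF less_imp_le[OF \<mu>(2)] e(1)] \<mu>(1)] .
    then show "- (\<epsilon> *\<^sub>R e) \<le> x - max_multiple e x *\<^sub>R e"
      by (simp add: algebra_simps)
  qed
  then show ?thesis by simp
qed

lemma max_multiple_norm_le:
  fixes e x :: "'a::banach_lattice"
  assumes "0 \<le> e" "e \<noteq> 0" "0 \<le> x"
  shows "max_multiple e x * norm e \<le> norm x"
  using norm_mono_nonneg[OF _ max_multiple_scaleR_le[OF assms]] max_multiple_nonneg[OF assms] assms
  by (simp add: scaleR_nonneg_nonneg)

lemma ex_gt_max_multiple_not_le:
  fixes x y :: "'a::banach_lattice"
  assumes "0 \<le> x" "x \<noteq> 0" "0 \<le> y" and not_multiple: "\<And>c. y \<noteq> c *\<^sub>R x"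
  shows "\<exists>l > max_multiple x y. \<not> y \<le> l *\<^sub>R x"
proof (rule ccontr)
  assume "\<not> ?thesis"
  then have "y \<le> (max_multiple x y + \<epsilon>) *\<^sub>R x" if "\<epsilon> > 0" for \<epsilon>
    using that by simp
  then have "0 \<le> max_multiple x y *\<^sub>R x - y"
    by (intro nonneg_if_ge_neg_scaleR[OF assms(1)]) (simp add: algebra_simps)
  then have "y = max_multiple x y *\<^sub>R x"
    using max_multiple_scaleR_le[OF assms(1-3)] by simp
  with not_multiple show False
    by blast
qed

text \<open>For \<open>l\<close> slightly above \<open>max_multiple x y\<close>, the positive and negative parts of
  \<open>y - l *\<^sub>R x\<close> are both nonzero.\<close>

lemma ex_disjoint_pieces_if_not_multiple:
  fixes x y :: "'a::banach_lattice"
  assumes y0: "0 \<le> y" and yx: "y \<le> x" and x0: "x \<noteq> 0" and not_multiple: "\<And>c. y \<noteq> c *\<^sub>R x"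
  shows "\<exists>a b. 0 \<le> a \<and> a \<le> x \<and> 0 \<le> b \<and> b \<le> x \<and> a \<noteq> 0 \<and> b \<noteq> 0 \<and> inf a b = 0"
proof -
  have xp: "0 \<le> x" using y0 yx by simp
  let ?m = "max_multiple x y"
  obtain l where l: "?m < l" "\<not> y \<le> l *\<^sub>R x"
    using ex_gt_max_multiple_not_le[OF xp x0 y0 not_multiple] by blast
  have l0: "0 \<le> l" using l(1) max_multiple_nonneg[OF xp x0 y0] by simp
  have l1: "l \<le> 1"
    using yx l(2) scaleR_right_mono[of 1 l x] xp by (cases "l \<le> 1") auto
  define a where "a = sup (y - l *\<^sub>R x) 0"
  define b where "b = sup (- (y - l *\<^sub>R x)) 0"
  have lx: "0 \<le> l *\<^sub>R x" "l *\<^sub>R x \<le> x"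
    using l0 l1 xp scaleR_right_mono[of l 1 x] by (simp_all add: scaleR_nonneg_nonneg)
  have "a \<le> x"
    unfolding a_def using lx yx xp by (auto intro: order_trans[of _ y])
  moreover have "b \<le> x"
    unfolding b_def using lx y0 xp by (auto intro: order_trans[of _ "l *\<^sub>R x"])
  moreover have "a \<noteq> 0"
    unfolding a_def using l(2) by (metis diff_le_0_iff_le sup_ge1)
  moreover have "b \<noteq> 0"
  proof
    assume "b = 0"
    then have "l *\<^sub>R x \<le> y" unfolding b_def by (metis neg_le_0_iff_le diff_ge_0_iff_ge sup_ge1
          minus_diff_eq)
    then have "l \<le> ?m" by (rule le_max_multiple[OF xp x0])
    with l(1) show False by simp
  qed
  moreover have "inf a b = 0"
    unfolding a_def b_def by (rule disjoint_pos_part_neg_part)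
  moreover have "0 \<le> a" "0 \<le> b"
    unfolding a_def b_def by simp_all
  ultimately show ?thesis by blast
qed

subsection \<open>Atoms and disjoint sequences\<close>

definition atom :: "'a::banach_lattice \<Rightarrow> bool" where
  "atom e \<longleftrightarrow> 0 \<le> e \<and> e \<noteq> 0 \<and> (\<forall>y. 0 \<le> y \<and> y \<le> e \<longrightarrow> (\<exists>c. y = c *\<^sub>R e))"

definition disjoint_sequence :: "(nat \<Rightarrow> 'a::banach_lattice) \<Rightarrow> bool" where
  "disjoint_sequence d \<longleftrightarrow>
     (\<forall>n. 0 \<le> d n \<and> d n \<noteq> 0) \<and> (\<forall>m n. m \<noteq> n \<longrightarrow> inf (d m) (d n) = 0)"

lemma disjoint_sequenceI:
  fixes d :: "nat \<Rightarrow> 'a::banach_lattice"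
  assumes "\<And>n. 0 \<le> d n" "\<And>n. d n \<noteq> 0" "\<And>m n. m < n \<Longrightarrow> inf (d m) (d n) = 0"
  shows "disjoint_sequence d"
  unfolding disjoint_sequence_def
  using assms by (metis inf_commute nat_neq_iff)

text \<open>Split repeatedly, continuing with the \<open>a\<close>-piece: the \<open>b\<close>-pieces cut off along
  the way are pairwise disjoint.\<close>

lemma ex_disjoint_sequence_if_splitting:
  fixes x :: "'a::banach_lattice"
  assumes split: "\<And>p. P p \<Longrightarrow> \<exists>a b. P a \<and> a \<le> p \<and> 0 \<le> b \<and> b \<le> p \<and> b \<noteq> 0 \<and> inf a b = 0"
    and "P x"
  shows "\<exists>d :: nat \<Rightarrow> 'a. disjoint_sequence d"
proof -
  obtain fa fb where f: "\<And>p. P p \<Longrightarrow>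
      P (fa p) \<and> fa p \<le> p \<and> 0 \<le> fb p \<and> fb p \<le> p \<and> fb p \<noteq> 0 \<and> inf (fa p) (fb p) = 0"
    using split by metis
  define c where "c n = (fa ^^ n) x" for n
  have P: "P (c n)" for n
    by (induction n) (use \<open>P x\<close> f in \<open>simp_all add: c_def\<close>)
  have c_antimono: "c n \<le> c m" if "m \<le> n" for m n
    using that
  proof (induction n)
    case (Suc n)
    then show ?case using f[OF P[of n]] by (cases "m = Suc n") (auto simp: c_def)
  qed simp
  have "disjoint_sequence (\<lambda>n. fb (c n))"
  proof (rule disjoint_sequenceI)
    fix m n :: nat assume "m < n"
    have "inf (fb (c m)) (fb (c n)) \<le> inf (fb (c m)) (c (Suc m))"
      using f[OF P[of n]] c_antimono[of "Suc m" n] \<open>m < n\<close> by (intro inf_mono) auto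
    also have "\<dots> = 0"
      using f[OF P[of m]] by (simp add: c_def inf_commute)
    finally show "inf (fb (c m)) (fb (c n)) = 0"
      using f[OF P[of m]] f[OF P[of n]] by (simp add: antisym)
  qed (use f P in auto)
  then show ?thesis by blast
qed

lemma ex_atom_below:
  fixes x :: "'a::banach_lattice"
  assumes "\<nexists>d :: nat \<Rightarrow> 'a. disjoint_sequence d" and "0 \<le> x" "x \<noteq> 0"
  shows "\<exists>e. atom e \<and> e \<le> x"
proof (rule ccontr)
  assume no_atom: "\<nexists>e. atom e \<and> e \<le> x"
  have "\<exists>a b. (0 \<le> a \<and> a \<le> x \<and> a \<noteq> 0) \<and> a \<le> p \<and> 0 \<le> b \<and> b \<le> p \<and> b \<noteq> 0 \<and> inf a b = 0"
    if p: "0 \<le> p \<and> p \<le> x \<and> p \<noteq> 0" for p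
  proof -
    obtain y where "0 \<le> y" "y \<le> p" "\<And>c. y \<noteq> c *\<^sub>R p"
      using no_atom p unfolding atom_def by blast
    then show ?thesis
      using ex_disjoint_pieces_if_not_multiple[of y p] p by (meson order_trans)
  qed
  with assms show False
    using ex_disjoint_sequence_if_splitting[of "\<lambda>p. 0 \<le> p \<and> p \<le> x \<and> p \<noteq> 0" x] by auto
qed

lemma ex_disjoint_sequence_if_extendable:
  fixes S :: "'a::banach_lattice set"
  assumes S: "\<And>e. e \<in> S \<Longrightarrow> 0 \<le> e \<and> e \<noteq> 0"
    and extend: "\<And>A. finite A \<Longrightarrow> A \<subseteq> S \<Longrightarrow> pairwise (\<lambda>a b. inf a b = 0) A \<Longrightarrow>
      \<exists>e\<in>S. \<forall>a\<in>A. inf e a = 0"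
  shows "\<exists>d :: nat \<Rightarrow> 'a. disjoint_sequence d"
proof -
  let ?Q = "\<lambda>A. finite A \<and> A \<subseteq> S \<and> pairwise (\<lambda>a b. inf a b = 0) A"
  obtain next_elem where next_elem: "\<And>A. ?Q A \<Longrightarrow> next_elem A \<in> S \<and> (\<forall>a\<in>A. inf (next_elem A) a = 0)"
    using extend by metis
  define F where "F n = ((\<lambda>A. insert (next_elem A) A) ^^ n) {}" for n
  have Q: "?Q (F n)" for n
  proof (induction n)
    case (Suc n)
    then show ?case
      using next_elem[OF Suc] by (auto simp: F_def pairwise_insert inf_commute)
  qed (simp add: F_def)
  have F_mono: "F m \<subseteq> F n" if "m \<le> n" for m n
    using that
  proof (induction n)
    case (Suc n)
    then show ?case by (cases "m = Suc n") (auto simp: F_def)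
  qed simp
  have "disjoint_sequence (\<lambda>n. next_elem (F n))"
  proof (rule disjoint_sequenceI)
    fix m n :: nat assume "m < n"
    then have "next_elem (F m) \<in> F n"
      using F_mono[of "Suc m" n] by (auto simp: F_def)
    then show "inf (next_elem (F m)) (next_elem (F n)) = 0"
      using next_elem[OF Q[of n]] by (simp add: inf_commute)
  qed (use next_elem[OF Q] S in auto)
  then show ?thesis by blast
qed

lemma ex_maximal_atom_family:
  assumes "\<nexists>d :: nat \<Rightarrow> 'a::banach_lattice. disjoint_sequence d"
  shows "\<exists>A :: 'a set. finite A \<and> (\<forall>a\<in>A. atom a) \<and> pairwise (\<lambda>a b. inf a b = 0) A \<and>
    (\<forall>e. atom e \<longrightarrow> (\<exists>a\<in>A. inf e a \<noteq> 0))"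
proof (rule ccontr)
  assume not_maximal: "\<not> ?thesis"
  have "\<exists>d :: nat \<Rightarrow> 'a. disjoint_sequence d"
  proof (rule ex_disjoint_sequence_if_extendable[of "Collect atom"])
    show "0 \<le> e \<and> e \<noteq> 0" if "e \<in> Collect atom" for e :: 'a
      using that by (simp add: atom_def)
    show "\<exists>e\<in>Collect atom. \<forall>a\<in>A. inf e a = 0"
      if "finite A" "A \<subseteq> Collect atom" "pairwise (\<lambda>a b. inf a b = 0) A" for A :: "'a set"
      using not_maximal that by (auto simp: subset_iff)
  qed
  with assms show False by blast
qed

lemma no_disjoint_sequence_if_fin_dim:
  assumes "fin_dim_space TYPE('a::banach_lattice)"
  shows "\<nexists>d :: nat \<Rightarrow> 'a. disjoint_sequence d"
proof
  assume "\<exists>d :: nat \<Rightarrow> 'a. disjoint_sequence d"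
  then obtain d :: "nat \<Rightarrow> 'a" where d: "\<And>n. 0 \<le> d n \<and> d n \<noteq> 0"
    "\<And>m n. m \<noteq> n \<Longrightarrow> inf (d m) (d n) = 0"
    unfolding disjoint_sequence_def by blast
  obtain B :: "'a set" where "finite B" "span B = UNIV"
    using assms unfolding fin_dim_space_def by blast
  have "inj d"
  proof (rule injI)
    fix m n assume "d m = d n"
    then show "m = n"
      using d by (metis inf.idem)
  qed
  moreover have "independent (range d)"
    using d by (intro independent_if_disjoint_nonneg pairwise_imageI) auto
  then have "finite (range d)"
    using independent_span_bound[OF \<open>finite B\<close>] \<open>span B = UNIV\<close> by blast
  ultimately show False
    using finite_imageD by blast
qed

text \<open>For a functional \<open>f\<close>, the element \<open>v = \<Sum>k<N. sgn (f (y k)) *\<^sub>R y k\<close> satisfies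
  \<open>|v| \<le> u\<close>, so the partial sums of \<open>\<Sum>k. \<bar>f (y k)\<bar>\<close> are bounded uniformly in \<open>N\<close>.\<close>

lemma weakly_null_if_disjoint_order_bounded:
  fixes y :: "nat \<Rightarrow> 'a::banach_lattice"
  assumes nonneg: "\<And>n. 0 \<le> y n" and bounded: "\<And>n. y n \<le> u"
    and disjoint: "\<And>m n. m \<noteq> n \<Longrightarrow> inf (y m) (y n) = 0"
  shows "weakly_tendsto y 0"
  unfolding weakly_tendsto_def
proof (intro allI impI)
  fix f :: "'a \<Rightarrow> real" assume f: "bounded_linear f"
  then obtain K where K: "K > 0" "\<And>x. norm (f x) \<le> norm x * K"
    using bounded_linear.pos_bounded by blast
  have u0: "0 \<le> u" using nonneg[of 0] bounded[of 0] by simp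
  have partial_sums: "(\<Sum>k<N. \<bar>f (y k)\<bar>) \<le> norm u * K" for N
  proof -
    let ?v = "\<Sum>k<N. sgn (f (y k)) *\<^sub>R y k"
    have "f ?v = (\<Sum>k<N. \<bar>f (y k)\<bar>)"
      using f by (simp add: linear_sum linear_scale bounded_linear.linear abs_sgn mult.commute)
    moreover have "lmod ?v \<le> lmod u"
    proof -
      have "lmod ?v \<le> (\<Sum>k<N. y k)"
        by (rule lmod_sum_scaleR_le) (auto simp: nonneg sgn_real_def)
      also have "\<dots> \<le> u"
        using disjoint by (intro sum_le_if_disjoint) (auto simp: nonneg bounded u0 pairwise_def)
      finally show ?thesis
        using lmod_eq_self[OF u0] by simp
    qed
    then have "norm ?v * K \<le> norm u * K"
      using norm_le_if_lmod_le K(1) by (intro mult_right_mono) auto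
    ultimately show ?thesis
      using K(2)[of ?v] by simp
  qed
  have "summable (\<lambda>k. \<bar>f (y k)\<bar>)"
    using partial_sums[of "Suc _"]
    by (intro bounded_imp_summable[of _ "norm u * K"]) (simp_all only: lessThan_Suc_atMost abs_ge_zero)
  then have "(\<lambda>k. f (y k)) \<longlonglongrightarrow> 0"
    using summable_LIMSEQ_zero tendsto_rabs_zero_iff by blast
  then show "(\<lambda>k. f (y k)) \<longlonglongrightarrow> f 0"
    using linear_0[OF bounded_linear.linear[OF f]] by simp
qed

lemma no_disjoint_sequence_if_uaw_dunford_pettis:
  assumes "uaw_dunford_pettis (id :: 'a::banach_lattice \<Rightarrow> 'a)"
  shows "\<nexists>d :: nat \<Rightarrow> 'a. disjoint_sequence d"
proof
  assume "\<exists>d :: nat \<Rightarrow> 'a. disjoint_sequence d"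
  then obtain d :: "nat \<Rightarrow> 'a" where d: "\<And>n. 0 \<le> d n \<and> d n \<noteq> 0"
    "\<And>m n. m \<noteq> n \<Longrightarrow> inf (d m) (d n) = 0"
    unfolding disjoint_sequence_def by blast
  define x where "x n = (1 / norm (d n)) *\<^sub>R d n" for n
  have x0: "0 \<le> x n" for n
    unfolding x_def using d(1) by (simp add: scaleR_nonneg_nonneg)
  have norm_x: "norm (x n) = 1" for n
    unfolding x_def using d(1) by simp
  have "uaw_tendsto x 0"
    unfolding uaw_tendsto_def
  proof (intro allI impI)
    fix u :: 'a assume "0 \<le> u"
    have "inf (inf (x m) u) (inf (x n) u) = 0" if "m \<noteq> n" for m n
    proof (rule antisym)
      have "inf (inf (x m) u) (inf (x n) u) \<le> inf (x m) (x n)"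
        by (intro inf_mono) auto
      also have "\<dots> = 0"
        unfolding x_def using d that by (intro disjoint_scaleR) auto
      finally show "inf (inf (x m) u) (inf (x n) u) \<le> 0" .
    qed (use x0 \<open>0 \<le> u\<close> in simp)
    then have "weakly_tendsto (\<lambda>n. inf (x n) u) 0"
      using x0 \<open>0 \<le> u\<close> by (intro weakly_null_if_disjoint_order_bounded[where u = u]) auto
    then show "weakly_tendsto (\<lambda>n. inf (lmod (x n - 0)) u) 0"
      by (simp add: lmod_eq_self x0)
  qed
  moreover have "bounded (range x)"
    using norm_x by (intro boundedI) auto
  ultimately have "(\<lambda>n. norm (x n)) \<longlonglongrightarrow> 0"
    using assms unfolding uaw_dunford_pettis_def by simp
  then show False
    using norm_x LIMSEQ_const_iff[of "1::real" 0] by simp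
qed

subsection \<open>Atomic bases\<close>

definition atomic_basis :: "'a::banach_lattice set \<Rightarrow> bool" where
  "atomic_basis A \<longleftrightarrow> finite A \<and> (\<forall>a\<in>A. 0 \<le> a \<and> a \<noteq> 0) \<and> pairwise (\<lambda>a b. inf a b = 0) A \<and>
     (\<forall>x. 0 \<le> x \<longrightarrow> (\<Sum>a\<in>A. max_multiple a x *\<^sub>R a) = x)"

lemma atomic_basisD:
  fixes A :: "'a::banach_lattice set"
  assumes "atomic_basis A"
  shows "finite A" and "a \<in> A \<Longrightarrow> 0 \<le> a" and "a \<in> A \<Longrightarrow> a \<noteq> 0"
    and "pairwise (\<lambda>a b. inf a b = 0) A"
    and "0 \<le> x \<Longrightarrow> (\<Sum>a\<in>A. max_multiple a x *\<^sub>R a) = x"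
  using assms unfolding atomic_basis_def by blast+

lemma maximal_atom_family_meets:
  fixes A :: "'a::banach_lattice set"
  assumes "\<nexists>d :: nat \<Rightarrow> 'a. disjoint_sequence d" and "\<forall>a\<in>A. atom a"
    and maximal: "\<forall>e. atom e \<longrightarrow> (\<exists>a\<in>A. inf e a \<noteq> 0)" and "0 \<le> z" "z \<noteq> 0"
  shows "\<exists>a\<in>A. inf z a \<noteq> 0"
proof -
  obtain e where e: "atom e" "e \<le> z"
    using ex_atom_below assms by blast
  then obtain a where a: "a \<in> A" "inf e a \<noteq> 0"
    using maximal by blast
  have "0 \<le> inf e a" "inf e a \<le> inf z a"
    using e a assms(2) inf_mono[OF e(2) order_refl] unfolding atom_def by auto
  then have "inf z a \<noteq> 0"
    using a(2) order.antisym[of "inf e a" 0] by force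
  then show ?thesis
    using a(1) by blast
qed

lemma sum_max_multiple_le:
  fixes A :: "'a::banach_lattice set"
  assumes "finite A" "\<And>a. a \<in> A \<Longrightarrow> 0 \<le> a \<and> a \<noteq> 0" "pairwise (\<lambda>a b. inf a b = 0) A" "0 \<le> x"
  shows "(\<Sum>a\<in>A. max_multiple a x *\<^sub>R a) \<le> x"
proof (rule sum_le_if_disjoint)
  show "pairwise (\<lambda>a b. inf (max_multiple a x *\<^sub>R a) (max_multiple b x *\<^sub>R b) = 0) A"
  proof (rule pairwiseI)
    fix a b assume "a \<in> A" "b \<in> A" "a \<noteq> b"
    then show "inf (max_multiple a x *\<^sub>R a) (max_multiple b x *\<^sub>R b) = 0"
      using assms by (intro disjoint_scaleR max_multiple_nonneg) (auto simp: pairwise_def)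
  qed
qed (use assms in \<open>simp_all add: max_multiple_nonneg max_multiple_scaleR_le scaleR_nonneg_nonneg\<close>)

text \<open>If the remainder \<open>r = x - \<Sum>a\<in>A. max_multiple a x *\<^sub>R a\<close> were nonzero, it would
  meet some \<open>a \<in> A\<close>, and \<open>inf r a = \<nu> *\<^sub>R a\<close> with \<open>\<nu> > 0\<close> would show that
  \<open>(max_multiple a x + \<nu>) *\<^sub>R a \<le> x\<close>.\<close>

lemma sum_max_multiple_eq_if_meets:
  fixes A :: "'a::banach_lattice set"
  assumes A: "finite A" "\<forall>a\<in>A. atom a" and disj: "pairwise (\<lambda>a b. inf a b = 0) A"
    and meets: "\<And>z. 0 \<le> z \<Longrightarrow> z \<noteq> 0 \<Longrightarrow> \<exists>a\<in>A. inf z a \<noteq> 0" and x: "0 \<le> x"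
  shows "(\<Sum>a\<in>A. max_multiple a x *\<^sub>R a) = x"
proof (rule ccontr)
  let ?t = "\<lambda>a. max_multiple a x *\<^sub>R a"
  have a0: "0 \<le> a" "a \<noteq> 0" if "a \<in> A" for a
    using A that unfolding atom_def by auto
  have le: "sum ?t A \<le> x"
    using A(1) a0 disj x by (intro sum_max_multiple_le) auto
  moreover assume "sum ?t A \<noteq> x"
  ultimately obtain a where a: "a \<in> A" "inf (x - sum ?t A) a \<noteq> 0"
    using meets[of "x - sum ?t A"] by auto
  have r: "0 \<le> inf (x - sum ?t A) a" "inf (x - sum ?t A) a \<le> a"
    using le a0[OF a(1)] by auto
  then obtain \<nu> where \<nu>: "inf (x - sum ?t A) a = \<nu> *\<^sub>R a"
    using A a(1) unfolding atom_def by blast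
  have "0 < \<nu>"
    using \<nu> a(2) r(1) a0[OF a(1)] scaleR_nonpos_nonneg[of \<nu> a] by (cases "0 < \<nu>") auto
  have "?t a \<le> sum ?t A"
    using A(1) _ a(1) by (rule member_le_sum_nonneg)
      (use a0 x in \<open>simp add: max_multiple_nonneg scaleR_nonneg_nonneg\<close>)
  moreover have "\<nu> *\<^sub>R a \<le> x - sum ?t A"
    using \<nu> inf_le1[of "x - sum ?t A" a] by simp
  ultimately have "?t a + \<nu> *\<^sub>R a \<le> sum ?t A + (x - sum ?t A)"
    by (rule add_mono)
  then have "(max_multiple a x + \<nu>) *\<^sub>R a \<le> x"
    by (simp add: scaleR_add_left)
  then have "max_multiple a x + \<nu> \<le> max_multiple a x"
    by (rule le_max_multiple[OF a0[OF a(1)]])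
  with \<open>0 < \<nu>\<close> show False
    by simp
qed

lemma ex_atomic_basis:
  assumes "\<nexists>d :: nat \<Rightarrow> 'a::banach_lattice. disjoint_sequence d"
  shows "\<exists>A :: 'a set. atomic_basis A"
proof -
  obtain A :: "'a set" where A: "finite A" "\<forall>a\<in>A. atom a" "pairwise (\<lambda>a b. inf a b = 0) A"
    and maximal: "\<forall>e. atom e \<longrightarrow> (\<exists>a\<in>A. inf e a \<noteq> 0)"
    using ex_maximal_atom_family[OF assms] by blast
  have "(\<Sum>a\<in>A. max_multiple a x *\<^sub>R a) = x" if "0 \<le> x" for x
    using A that maximal_atom_family_meets[OF assms A(2) maximal]
    by (intro sum_max_multiple_eq_if_meets) auto
  then have "atomic_basis A"
    using A unfolding atomic_basis_def atom_def by auto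
  then show ?thesis ..
qed

lemma span_atomic_basis:
  fixes A :: "'a::banach_lattice set"
  assumes "atomic_basis A"
  shows "span A = UNIV"
proof -
  have nonneg: "x \<in> span A" if "0 \<le> x" for x
  proof -
    have "(\<Sum>a\<in>A. max_multiple a x *\<^sub>R a) \<in> span A"
      by (intro span_sum span_scale span_base)
    then show ?thesis
      using atomic_basisD(5)[OF assms that] by simp
  qed
  have "sup x 0 - sup (- x) 0 \<in> span A" for x
    by (intro span_diff nonneg) auto
  then have "x \<in> span A" for x
    by (simp only: pos_part_diff_neg_part)
  then show ?thesis
    by auto
qed

lemma fin_dim_if_no_disjoint_sequence:
  assumes "\<nexists>d :: nat \<Rightarrow> 'a::banach_lattice. disjoint_sequence d"
  shows "fin_dim_space TYPE('a)"
proof -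
  obtain A :: "'a set" where "atomic_basis A"
    using ex_atomic_basis[OF assms] ..
  then show ?thesis
    using span_atomic_basis atomic_basisD(1) unfolding fin_dim_space_def by blast
qed

lemma independent_atomic_basis: "atomic_basis A \<Longrightarrow> independent A"
  by (intro independent_if_disjoint_nonneg) (simp_all add: atomic_basisD)

lemma representation_atomic_basis:
  assumes A: "atomic_basis A" and "0 \<le> w" "a \<in> A"
  shows "representation A w a = max_multiple a w"
proof -
  note finite = atomic_basisD(1)[OF A]
  have decomposition: "(\<Sum>b\<in>A. max_multiple b w *\<^sub>R b) = w"
    using atomic_basisD(5)[OF A \<open>0 \<le> w\<close>] .
  have "(\<Sum>b\<in>A. representation A w b *\<^sub>R b) = w"
    using independent_atomic_basis[OF A] span_atomic_basis[OF A] finite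
    by (intro real_vector.sum_representation_eq) auto
  then have "(\<Sum>b\<in>A. (representation A w b - max_multiple b w) *\<^sub>R b) = 0"
    using decomposition by (simp add: scaleR_diff_left sum_subtractf)
  then have "representation A w a - max_multiple a w = 0"
    by (rule real_vector.independentD[OF independent_atomic_basis[OF A] finite order_refl _ \<open>a \<in> A\<close>])
  then show ?thesis
    by simp
qed

lemma abs_representation_atomic_basis_le:
  assumes A: "atomic_basis A" and "a \<in> A"
  shows "\<bar>representation A v a\<bar> \<le> norm v / norm a"
proof -
  have a: "0 \<le> a" "a \<noteq> 0"
    using atomic_basisD(2,3)[OF A \<open>a \<in> A\<close>] by auto
  have bound: "0 \<le> max_multiple a w" "max_multiple a w \<le> norm v / norm a"
    if "0 \<le> w" "norm w \<le> norm v" for w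
    using max_multiple_nonneg[OF a that(1)] max_multiple_norm_le[OF a that(1)] that a
    by (simp_all add: pos_le_divide_eq)
  have "representation A v a = representation A (sup v 0 - sup (- v) 0) a"
    by (simp only: pos_part_diff_neg_part)
  also have "\<dots> = representation A (sup v 0) a - representation A (sup (- v) 0) a"
    using span_atomic_basis[OF A]
    by (subst real_vector.representation_diff[OF independent_atomic_basis[OF A]]) auto
  also have "\<dots> = max_multiple a (sup v 0) - max_multiple a (sup (- v) 0)"
    using representation_atomic_basis[OF A _ \<open>a \<in> A\<close>] by simp
  finally show ?thesis
    using bound[OF _ norm_pos_part_le] bound[OF _ norm_neg_part_le] by (simp add: abs_le_iff)
qed

lemma bounded_linear_representation_atomic_basis:
  assumes A: "atomic_basis A" and "a \<in> A"
  shows "bounded_linear (\<lambda>v. representation A v a)"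
proof -
  have "Vector_Spaces.linear (*\<^sub>R) (*) (\<lambda>v. representation A v a)"
    using independent_atomic_basis[OF A] span_atomic_basis[OF A]
    by (rule real_vector.linear_representation)
  then have "linear (\<lambda>v. representation A v a)"
    unfolding linear_def real_scaleR_def [abs_def] .
  moreover have "norm (representation A v a) \<le> norm v * (1 / norm a)" for v
    using abs_representation_atomic_basis_le[OF assms] by simp
  ultimately show ?thesis
    by (intro bounded_linear.intro bounded_linear_axioms.intro exI[of _ "1 / norm a"]) auto
qed

lemma lmod_le_if_norm_le_atomic_basis:
  assumes A: "atomic_basis A" and "norm x \<le> M"
  shows "lmod x \<le> (\<Sum>a\<in>A. (M / norm a) *\<^sub>R a)"
proof -
  have "lmod x = (\<Sum>a\<in>A. max_multiple a (lmod x) *\<^sub>R a)"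
    using atomic_basisD(5)[OF A lmod_nonneg[of x]] by simp
  also have "\<dots> \<le> (\<Sum>a\<in>A. (M / norm a) *\<^sub>R a)"
  proof (rule sum_mono)
    fix a assume "a \<in> A"
    then have a: "0 \<le> a" "a \<noteq> 0"
      using atomic_basisD(2,3)[OF A] by auto
    have "max_multiple a (lmod x) * norm a \<le> M"
      using max_multiple_norm_le[OF a lmod_nonneg[of x]] \<open>norm x \<le> M\<close> by (simp add: norm_lmod)
    then show "max_multiple a (lmod x) *\<^sub>R a \<le> (M / norm a) *\<^sub>R a"
      using a by (intro scaleR_right_mono) (simp_all add: pos_le_divide_eq)
  qed
  finally show ?thesis .
qed

lemma norm_le_sum_max_multiple_atomic_basis:
  assumes A: "atomic_basis A" and "0 \<le> w"
  shows "norm w \<le> (\<Sum>a\<in>A. max_multiple a w * norm a)"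
proof -
  have "norm w = norm (\<Sum>a\<in>A. max_multiple a w *\<^sub>R a)"
    using atomic_basisD(5)[OF A \<open>0 \<le> w\<close>] by simp
  also have "\<dots> \<le> (\<Sum>a\<in>A. norm (max_multiple a w *\<^sub>R a))"
    by (rule norm_sum)
  also have "\<dots> = (\<Sum>a\<in>A. max_multiple a w * norm a)"
  proof (rule sum.cong)
    fix a assume "a \<in> A"
    then have "0 \<le> max_multiple a w"
      using atomic_basisD(2,3)[OF A] \<open>0 \<le> w\<close> by (simp add: max_multiple_nonneg)
    then show "norm (max_multiple a w *\<^sub>R a) = max_multiple a w * norm a"
      by simp
  qed simp
  finally show ?thesis .
qed

lemma max_multiple_tendsto_0_if_weakly_null:
  assumes A: "atomic_basis A" and "a \<in> A" and "\<And>n. 0 \<le> w n" and "weakly_tendsto w 0"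
  shows "(\<lambda>n. max_multiple a (w n)) \<longlonglongrightarrow> 0"
proof -
  have "(\<lambda>n. representation A (w n) a) \<longlonglongrightarrow> representation A 0 a"
    using assms bounded_linear_representation_atomic_basis[OF A \<open>a \<in> A\<close>]
    unfolding weakly_tendsto_def by blast
  then show ?thesis
    by (simp add: representation_atomic_basis[OF A assms(3) \<open>a \<in> A\<close>]
        real_vector.representation_zero)
qed

lemma uaw_dunford_pettis_id_if_atomic_basis:
  fixes A :: "'a::banach_lattice set"
  assumes A: "atomic_basis A"
  shows "uaw_dunford_pettis (id :: 'a \<Rightarrow> 'a)"
  unfolding uaw_dunford_pettis_def
proof (intro conjI allI impI)
  show "bounded_linear (id :: 'a \<Rightarrow> 'a)"
    by (simp add: id_def bounded_linear_ident)
  fix x :: "nat \<Rightarrow> 'a"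
  assume bdd: "bounded (range x)" and uaw: "uaw_tendsto x 0"
  obtain M where M: "\<And>n. norm (x n) \<le> M"
    using bdd unfolding bounded_iff by blast
  define u where "u = (\<Sum>a\<in>A. (M / norm a) *\<^sub>R a)"
  have inf_u: "inf (lmod (x n - 0)) u = lmod (x n)" for n
    using lmod_le_if_norm_le_atomic_basis[OF A M] by (simp add: u_def inf_absorb1)
  have "0 \<le> u"
    using lmod_le_if_norm_le_atomic_basis[OF A M, of 0] lmod_nonneg[of "x 0"] by (simp add: u_def)
  then have "weakly_tendsto (\<lambda>n. inf (lmod (x n - 0)) u) 0"
    using uaw unfolding uaw_tendsto_def by blast
  then have "weakly_tendsto (\<lambda>n. lmod (x n)) 0"
    unfolding inf_u .
  then have "(\<lambda>n. \<Sum>a\<in>A. max_multiple a (lmod (x n)) * norm a) \<longlonglongrightarrow> 0"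
    using max_multiple_tendsto_0_if_weakly_null[OF A _ lmod_nonneg]
    by (auto intro!: tendsto_null_sum tendsto_mult_left_zero)
  moreover have "norm (norm (id (x n))) \<le> (\<Sum>a\<in>A. max_multiple a (lmod (x n)) * norm a)" for n
    using norm_le_sum_max_multiple_atomic_basis[OF A lmod_nonneg[of "x n"]] by (simp add: norm_lmod)
  ultimately show "(\<lambda>n. norm (id (x n))) \<longlonglongrightarrow> 0"
    by (rule Lim_null_comparison[OF always_eventually[OF allI], rotated])
qed

theorem corollary2p27:
  shows "uaw_dunford_pettis (id :: 'a::banach_lattice \<Rightarrow> 'a) \<longleftrightarrow> fin_dim_space TYPE('a)"
proof
  assume "uaw_dunford_pettis (id :: 'a \<Rightarrow> 'a)"
  then have "\<nexists>d :: nat \<Rightarrow> 'a. disjoint_sequence d"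
    by (rule no_disjoint_sequence_if_uaw_dunford_pettis)
  then show "fin_dim_space TYPE('a)"
    by (rule fin_dim_if_no_disjoint_sequence)
next
  assume "fin_dim_space TYPE('a)"
  then have "\<nexists>d :: nat \<Rightarrow> 'a. disjoint_sequence d"
    by (rule no_disjoint_sequence_if_fin_dim)
  then obtain A :: "'a set" where "atomic_basis A"
    using ex_atomic_basis by blast
  then show "uaw_dunford_pettis (id :: 'a \<Rightarrow> 'a)"
    by (rule uaw_dunford_pettis_id_if_atomic_basis)
qed

end
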